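(* Under the setting of the context (arbitrary $S^{(0)},F_2^{(0)}$, $A_2\neq0$, $Q^\top Q=I_k$, $\mu_0>0$, $\rho>1$), there is a constant $\gamma\ge 0$ such that $\|A_2-QS^{(k)}-F_2^{(k)}\|_F\le \frac{\gamma}{\mu_k}$ for all $k=1,2,\dots$.
   Context: For a matrix $X$, $\|X\|_1=\sum_{i,j}|X_{ij}|$, $\|X\|_\infty=\max_{i,j}|X_{ij}|$, $\|X\|_F$ the Frobenius norm, $\langle Y,X\rangle=\mathrm{Trace}(Y^\top X)$. The shrinkage operator $\mathcal{S}_\tau$ acts entrywise by $\mathcal{S}_\tau(x)=\mathrm{sign}(x)\max\{|x|-\tau,0\}$. Augmented Lagrangian: $L(S,F_2,Y,\mu)=\|F_2\|_1+\langle Y,A_2-QS-F_2\rangle+\frac{\mu}{2}\|A_2-QS-F_2\|_F^2$, with $A_2\in\mathbb{R}^{m\times n}$, $Q\in\mathbb{R}^{m\times k}$, $Q^\top Q=I_k$. ALM iteration: $Y^{(0)}=A_2/\|A_2\|_\infty$, and for $k\ge0$: $S^{(k+1)}=Q^\top(A_2-F_2^{(k)}+\frac{1}{\mu_k}Y^{(k)})$, $F_2^{(k+1)}=\mathcal{S}_{1/\mu_k}(A_2-QS^{(k+1)}+\frac{1}{\mu_k}Y^{(k)})$, $Y^{(k+1)}=Y^{(k)}+\mu_k(A_2-QS^{(k+1)}-F_2^{(k+1)})$, $\mu_{k+1}=\rho\mu_k$. *)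

theory Defs
  imports "HOL-Analysis.Analysis"
begin

text \<open>Matrices are rendered as real ^ 'c ^ 'r (rows indexed by 'r, columns by 'c).\<close>

definition frob_norm :: "real ^ 'c ^ 'r \<Rightarrow> real" where
  "frob_norm X = sqrt (\<Sum>i\<in>UNIV. \<Sum>j\<in>UNIV. (X $ i $ j)\<^sup>2)"

definition max_norm :: "real ^ 'c ^ 'r \<Rightarrow> real" where
  "max_norm X = Max {\<bar>X $ i $ j\<bar> | i j. True}"

definition shrink :: "real \<Rightarrow> real \<Rightarrow> real" where
  "shrink \<tau> x = sgn x * max (\<bar>x\<bar> - \<tau>) 0"

definition shrink_mat :: "real \<Rightarrow> real ^ 'c ^ 'r \<Rightarrow> real ^ 'c ^ 'r" where
  "shrink_mat \<tau> X = (\<chi> i j. shrink \<tau> (X $ i $ j))"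

end

theory Submission
  imports Defs
begin

text \<open>The residual at step k+1 equals (Y(k+1) - Y(k)) / \<mu>(k), and the multiplier update
  Y(k+1) = \<mu>(k) (W - S_{1/\<mu>(k)}(W)) has all entries in [-1, 1] because shrinkage moves each
  entry by at most 1/\<mu>(k). So the multipliers stay bounded and the residual decays like
  1/\<mu>(k).\<close>

lemma frob_norm_eq_norm: "frob_norm (X :: real ^ 'c ^ 'r) = norm X"
  unfolding frob_norm_def norm_vec_def L2_set_def
  by (simp add: sum_nonneg)

lemma abs_diff_shrink_le: "\<tau> \<ge> 0 \<Longrightarrow> \<bar>x - shrink \<tau> x\<bar> \<le> \<tau>"
  unfolding shrink_def by (auto simp: sgn_if abs_if max_def)

lemma norm_matrix_le_if_entries_le:
  fixes X :: "real ^ 'c ^ 'r"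
  assumes "\<And>i j. \<bar>X $ i $ j\<bar> \<le> c"
  shows "norm X \<le> c * sqrt (real (CARD('r) * CARD('c)))"
proof -
  have c: "c \<ge> 0"
    using assms[of undefined undefined] by linarith
  have "(\<Sum>i\<in>UNIV. \<Sum>j\<in>UNIV. (X $ i $ j)\<^sup>2) \<le> (\<Sum>i\<in>(UNIV::'r set). \<Sum>j\<in>(UNIV::'c set). c\<^sup>2)"
  proof (intro sum_mono)
    fix i j
    show "(X $ i $ j)\<^sup>2 \<le> c\<^sup>2"
      using power_mono[OF assms[of i j] abs_ge_zero, of 2] by simp
  qed
  also have "\<dots> = c\<^sup>2 * real (CARD('r) * CARD('c))"
    by simp
  finally have "norm X \<le> sqrt (c\<^sup>2 * real (CARD('r) * CARD('c)))"
    unfolding frob_norm_eq_norm[symmetric] frob_norm_def by (rule real_sqrt_le_mono)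
  also have "\<dots> = c * sqrt (real (CARD('r) * CARD('c)))"
    using c by (simp add: real_sqrt_mult)
  finally show ?thesis .
qed

lemma norm_scaleR_diff_shrink_mat_le:
  fixes W :: "real ^ 'c ^ 'r"
  assumes "\<mu> > 0"
  shows "norm (\<mu> *\<^sub>R (W - shrink_mat (1 / \<mu>) W)) \<le> sqrt (real (CARD('r) * CARD('c)))"
proof -
  have "\<bar>(\<mu> *\<^sub>R (W - shrink_mat (1 / \<mu>) W)) $ i $ j\<bar> \<le> 1" for i j
  proof -
    have "\<bar>W $ i $ j - shrink (1 / \<mu>) (W $ i $ j)\<bar> \<le> 1 / \<mu>"
      by (rule abs_diff_shrink_le) (use assms in simp)
    then show ?thesis
      using assms by (simp add: shrink_mat_def abs_mult pos_le_divide_eq mult.commute)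
  qed
  then show ?thesis
    using norm_matrix_le_if_entries_le[of "\<mu> *\<^sub>R (W - shrink_mat (1 / \<mu>) W)" 1] by simp
qed

lemma norm_diff_le_if_tail_bounded:
  fixes Y :: "nat \<Rightarrow> 'a :: real_normed_vector"
  assumes "\<And>t. norm (Y (Suc t)) \<le> C"
  shows "norm (Y (Suc s) - Y s) \<le> 2 * C + norm (Y 0)"
proof -
  have "norm (Y s) \<le> C + norm (Y 0)"
  proof (cases s)
    case 0
    have "0 \<le> C"
      using assms[of 0] norm_ge_zero[of "Y (Suc 0)"] by linarith
    then show ?thesis
      using 0 by simp
  next
    case (Suc r)
    show ?thesis
      unfolding Suc using assms[of r] norm_ge_zero[of "Y 0"] by linarith
  qed
  then show ?thesis
    using norm_triangle_ineq4[of "Y (Suc s)" "Y s"] assms[of s] by linarith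
qed

theorem mainTheorem2:
  fixes A2 :: "real ^ 'n ^ 'm" and Q :: "real ^ 'k ^ 'm"
    and S :: "nat \<Rightarrow> real ^ 'n ^ 'k" and F2 Y :: "nat \<Rightarrow> real ^ 'n ^ 'm"
    and \<mu> :: "nat \<Rightarrow> real" and \<rho> :: real
  assumes A2_nz: "A2 \<noteq> 0"
    and Q_orth: "transpose Q ** Q = mat 1"
    and mu0: "\<mu> 0 > 0"
    and rho: "\<rho> > 1"
    and Y0: "Y 0 = (1 / max_norm A2) *\<^sub>R A2"
    and S_step: "\<And>t. S (Suc t) = transpose Q ** (A2 - F2 t + (1 / \<mu> t) *\<^sub>R Y t)"
    and F_step: "\<And>t. F2 (Suc t) = shrink_mat (1 / \<mu> t) (A2 - Q ** S (Suc t) + (1 / \<mu> t) *\<^sub>R Y t)"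
    and Y_step: "\<And>t. Y (Suc t) = Y t + \<mu> t *\<^sub>R (A2 - Q ** S (Suc t) - F2 (Suc t))"
    and mu_step: "\<And>t. \<mu> (Suc t) = \<rho> * \<mu> t"
  shows "\<exists>\<gamma>\<ge>0. \<forall>t\<ge>1. frob_norm (A2 - Q ** S t - F2 t) \<le> \<gamma> / \<mu> t"
proof -
  define C where "C = sqrt (real (CARD('m) * CARD('n)))"
  define \<gamma> where "\<gamma> = \<rho> * (2 * C + norm (Y 0))"
  have mu_pos: "\<mu> t > 0" for t
    by (induction t) (use mu0 rho mu_step in auto)
  have Y_bounded: "norm (Y (Suc t)) \<le> C" for t
  proof -
    have "Y (Suc t) = \<mu> t *\<^sub>R (W - shrink_mat (1 / \<mu> t) W)"
      if "W = A2 - Q ** S (Suc t) + (1 / \<mu> t) *\<^sub>R Y t" for W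
      using mu_pos[of t] unfolding that Y_step F_step by (simp add: algebra_simps)
    then show ?thesis
      unfolding C_def using norm_scaleR_diff_shrink_mat_le[OF mu_pos] by metis
  qed
  have "frob_norm (A2 - Q ** S t - F2 t) \<le> \<gamma> / \<mu> t" if "t \<ge> 1" for t
  proof -
    obtain s where t: "t = Suc s"
      using \<open>t \<ge> 1\<close> by (cases t) auto
    have "A2 - Q ** S (Suc s) - F2 (Suc s) = (1 / \<mu> s) *\<^sub>R (Y (Suc s) - Y s)"
      using mu_pos[of s] unfolding Y_step by simp
    then have "frob_norm (A2 - Q ** S (Suc s) - F2 (Suc s)) \<le> (2 * C + norm (Y 0)) / \<mu> s"
      using norm_diff_le_if_tail_bounded[of Y C s] Y_bounded mu_pos[of s]
      by (simp add: frob_norm_eq_norm divide_right_mono)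
    also have "\<dots> = \<gamma> / \<mu> (Suc s)"
      unfolding \<gamma>_def mu_step using rho mu_pos[of s] by simp
    finally show ?thesis
      unfolding t .
  qed
  moreover have "\<gamma> \<ge> 0"
    unfolding \<gamma>_def C_def using rho by simp
  ultimately show ?thesis
    by blast
qed

end
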